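(* Let $N\ge 1$, let $\lambda_1,\dots,\lambda_N$ be distinct real numbers and $\mu_1,\dots,\mu_N$ nonzero real constants. On $\mathbb{R}^{6N}$ with coordinates $\phi_{ij},\psi_{ij}$ ($i=1,2,3$, $j=1,\dots,N$) consider the nonlinearized spatial system \[ \begin{pmatrix}\phi_{1j}\\ \phi_{2j}\\ \phi_{3j}\end{pmatrix}_x=U(\tilde u,\lambda_j)\begin{pmatrix}\phi_{1j}\\ \phi_{2j}\\ \phi_{3j}\end{pmatrix},\qquad \begin{pmatrix}\psi_{1j}\\ \psi_{2j}\\ \psi_{3j}\end{pmatrix}_x=-U(\tilde u,\lambda_j)^T\begin{pmatrix}\psi_{1j}\\ \psi_{2j}\\ \psi_{3j}\end{pmatrix},\quad j=1,\dots,N, \] where $\tilde u=(\tilde q,\tilde r)^T$ with $\tilde q=\sqrt2(\langle P_1,BQ_2\rangle+\langle P_2,BQ_3\rangle)$, $\tilde r=\sqrt2(\langle P_2,BQ_1\rangle+\langle P_3,BQ_2\rangle)$. Then the functions \[\bar F_j=\sum_{i=1}^3\phi_{ij}\psi_{ij},\qquad 1\le j\le N,\] are integrals of motion of this system (constant along its solutions), they are in involution, $\{\bar F_k,\bar F_l\}=0$ for all $1\le k,l\le N$, with respect to the Poisson bracket below, and they are independent (their gradients are linearly independent at every point) over the region \[\Omega=\Big\{(\phi,\psi)\in\mathbb{R}^{6N}:\ \sum_{i=1}^3(\phi_{ij}^2+\psi_{ij}^2)\neq 0\ \text{for all } 1\le j\le N\Big\}.\]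
   Context: For $u=(q,r)^T$ and a parameter $\lambda$, $U(u,\lambda)=\begin{pmatrix}-2\lambda&\sqrt2 q&0\\ \sqrt2 r&0&\sqrt2 q\\ 0&\sqrt2 r&2\lambda\end{pmatrix}$. $B=\mathrm{diag}(\mu_1,\dots,\mu_N)$, $P_i=(\phi_{i1},\dots,\phi_{iN})^T$, $Q_i=(\psi_{i1},\dots,\psi_{iN})^T$ for $i=1,2,3$, and $\langle\cdot,\cdot\rangle$ is the standard inner product on $\mathbb{R}^N$. The Poisson bracket on $\mathbb{R}^{6N}$ is $\{F,G\}=\sum_{i=1}^3\big(\langle \tfrac{\partial F}{\partial Q_i},B^{-1}\tfrac{\partial G}{\partial P_i}\rangle-\langle \tfrac{\partial F}{\partial P_i},B^{-1}\tfrac{\partial G}{\partial Q_i}\rangle\big)$, where $\frac{\partial}{\partial P_i}=(\frac{\partial}{\partial\phi_{i1}},\dots,\frac{\partial}{\partial\phi_{iN}})^T$ and similarly for $Q_i$. *)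

theory Defs
  imports "HOL-Analysis.Analysis"
begin

text \<open>Phase space R^{6N}: a point is a pair (phi, psi); phi $ j $ i is the coordinate
  phi_{ij} (j ranges over the finite index type 'n with N = CARD('n) elements,
  i ranges over the type 3 with elements 1, 2, 3).\<close>

type_synonym 'n state = "(real^3^'n) \<times> (real^3^'n)"

definition Umat :: "real \<Rightarrow> real \<Rightarrow> real \<Rightarrow> real^3^3" where
  "Umat q r lam = vector [vector [-2*lam, sqrt 2 * q, 0],
                          vector [sqrt 2 * r, 0, sqrt 2 * q],
                          vector [0, sqrt 2 * r, 2*lam]]"

definition qt :: "('n::finite \<Rightarrow> real) \<Rightarrow> 'n state \<Rightarrow> real" where
  "qt mu z = sqrt 2 * ((\<Sum>j\<in>UNIV. fst z $ j $ 1 * mu j * snd z $ j $ 2)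
                     + (\<Sum>j\<in>UNIV. fst z $ j $ 2 * mu j * snd z $ j $ 3))"

definition rt :: "('n::finite \<Rightarrow> real) \<Rightarrow> 'n state \<Rightarrow> real" where
  "rt mu z = sqrt 2 * ((\<Sum>j\<in>UNIV. fst z $ j $ 2 * mu j * snd z $ j $ 1)
                     + (\<Sum>j\<in>UNIV. fst z $ j $ 3 * mu j * snd z $ j $ 2))"

definition vf :: "('n::finite \<Rightarrow> real) \<Rightarrow> ('n \<Rightarrow> real) \<Rightarrow> 'n state \<Rightarrow> 'n state" where
  "vf lam mu z =
     ((\<chi> j. Umat (qt mu z) (rt mu z) (lam j) *v (fst z $ j)),
      (\<chi> j. - (transpose (Umat (qt mu z) (rt mu z) (lam j)) *v (snd z $ j))))"

definition Fbar :: "'n::finite \<Rightarrow> 'n state \<Rightarrow> real" where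
  "Fbar j z = (\<Sum>i\<in>UNIV. fst z $ j $ i * snd z $ j $ i)"

definition e_phi :: "'n::finite \<Rightarrow> 3 \<Rightarrow> 'n state" where
  "e_phi j i = ((\<chi> k. \<chi> l. if k = j \<and> l = i then 1 else 0), 0)"

definition e_psi :: "'n::finite \<Rightarrow> 3 \<Rightarrow> 'n state" where
  "e_psi j i = (0, (\<chi> k. \<chi> l. if k = j \<and> l = i then 1 else 0))"

definition dphi :: "('n::finite state \<Rightarrow> real) \<Rightarrow> 'n state \<Rightarrow> 'n \<Rightarrow> 3 \<Rightarrow> real" where
  "dphi F z j i = frechet_derivative F (at z) (e_phi j i)"

definition dpsi :: "('n::finite state \<Rightarrow> real) \<Rightarrow> 'n state \<Rightarrow> 'n \<Rightarrow> 3 \<Rightarrow> real" where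
  "dpsi F z j i = frechet_derivative F (at z) (e_psi j i)"

text \<open>Poisson bracket
  {F,G} = sum_i (<dF/dQ_i, B^{-1} dG/dP_i> - <dF/dP_i, B^{-1} dG/dQ_i>).\<close>
definition pbracket :: "('n::finite \<Rightarrow> real) \<Rightarrow> ('n state \<Rightarrow> real) \<Rightarrow> ('n state \<Rightarrow> real)
                        \<Rightarrow> 'n state \<Rightarrow> real" where
  "pbracket mu F G z = (\<Sum>i\<in>UNIV. \<Sum>j\<in>UNIV.
      dpsi F z j i * dphi G z j i / mu j - dphi F z j i * dpsi G z j i / mu j)"

definition grad :: "('n::finite state \<Rightarrow> real) \<Rightarrow> 'n state \<Rightarrow> 'n state" where
  "grad F z = ((\<chi> j. \<chi> i. dphi F z j i), (\<chi> j. \<chi> i. dpsi F z j i))"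

definition Omega :: "'n::finite state set" where
  "Omega = {z. \<forall>j. (\<Sum>i\<in>UNIV. (fst z $ j $ i)\<^sup>2 + (snd z $ j $ i)\<^sup>2) \<noteq> 0}"

end

theory Submission
  imports Defs
begin

text \<open>Each \<open>Fbar j\<close> is the pairing \<open>\<langle>\<Phi>\<^sub>j, \<Psi>\<^sub>j\<rangle>\<close> of a solution of
  \<open>\<Phi>' = U \<Phi>\<close> with a solution of the adjoint system \<open>\<Psi>' = -U\<^sup>T \<Psi>\<close>, so its derivative
  \<open>\<langle>U \<Phi>, \<Psi>\<rangle> - \<langle>\<Phi>, U\<^sup>T \<Psi>\<rangle>\<close> vanishes whatever \<open>U\<close> is.
  The partial derivatives of \<open>Fbar j\<close> only involve the \<open>j\<close>-th block of coordinates, where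
  they are \<open>(\<Psi>\<^sub>j, \<Phi>\<^sub>j)\<close>; hence the brackets vanish identically, and the gradients are
  independent wherever no block \<open>(\<Phi>\<^sub>j, \<Psi>\<^sub>j)\<close> vanishes.\<close>

lemma first_integral_const_on_integral_curve:
  fixes F :: "'a::real_normed_vector \<Rightarrow> real"
  assumes "is_interval T"
    and curve: "\<And>t. t \<in> T \<Longrightarrow> (\<gamma> has_derivative (\<lambda>h. h *\<^sub>R V (\<gamma> t))) (at t within T)"
    and F: "\<And>z. (F has_derivative F' z) (at z)"
    and tangent: "\<And>z. F' z (V z) = 0"
    and "s \<in> T" "t \<in> T"
  shows "F (\<gamma> s) = F (\<gamma> t)"
proof -
  have "((F \<circ> \<gamma>) has_derivative (\<lambda>h. 0)) (at t within T)" if "t \<in> T" for t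
  proof -
    have "((F \<circ> \<gamma>) has_derivative (\<lambda>h. F' (\<gamma> t) (h *\<^sub>R V (\<gamma> t)))) (at t within T)"
      using diff_chain_within[OF curve[OF that] has_derivative_at_withinI[OF F]] by (simp add: o_def)
    moreover have "F' (\<gamma> t) (h *\<^sub>R V (\<gamma> t)) = 0" for h
      using linear_scale[OF has_derivative_linear[OF F]] tangent by simp
    ultimately show ?thesis by simp
  qed
  then obtain c where "\<forall>x\<in>T. (F \<circ> \<gamma>) x = c"
    using has_derivative_zero_constant[OF is_interval_convex[OF \<open>is_interval T\<close>]] by blast
  with \<open>s \<in> T\<close> \<open>t \<in> T\<close> show ?thesis by simp
qed

lemma inner_matrix_vector_transpose:
  fixes A :: "real^'n^'m"
  shows "(A *v x) \<bullet> y = x \<bullet> (transpose A *v y)"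
  by (metis dot_lmul_matrix vector_transpose_matrix)

lemma Fbar_eq_inner: "Fbar j z = fst z $ j \<bullet> snd z $ j"
  by (simp add: Fbar_def inner_vec_def)

lemma has_derivative_Fbar:
  "(Fbar j has_derivative (\<lambda>h. fst z $ j \<bullet> snd h $ j + fst h $ j \<bullet> snd z $ j)) (at z within S)"
  unfolding Fbar_eq_inner[abs_def]
  by (intro has_derivative_inner bounded_linear_imp_has_derivative
        bounded_linear_compose[OF bounded_linear_vec_nth] bounded_linear_fst bounded_linear_snd)

lemma Fbar_derivative_vf:
  "fst z $ j \<bullet> snd (vf lam mu z) $ j + fst (vf lam mu z) $ j \<bullet> snd z $ j = 0"
  by (simp add: vf_def inner_matrix_vector_transpose)

lemma Fbar_const_on_integral_curve:
  assumes "is_interval T"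
    and "\<And>t. t \<in> T \<Longrightarrow> (\<gamma> has_derivative (\<lambda>h. h *\<^sub>R vf lam mu (\<gamma> t))) (at t within T)"
    and "s \<in> T" "t \<in> T"
  shows "Fbar j (\<gamma> s) = Fbar j (\<gamma> t)"
  by (rule first_integral_const_on_integral_curve[OF assms(1,2) has_derivative_Fbar
        Fbar_derivative_vf assms(3,4)])

lemma frechet_derivative_Fbar:
  "frechet_derivative (Fbar j) (at z) = (\<lambda>h. fst z $ j \<bullet> snd h $ j + fst h $ j \<bullet> snd z $ j)"
  by (rule has_derivative_Fbar[THEN frechet_derivative_at, symmetric])

lemma dphi_Fbar: "dphi (Fbar k) z j i = (if j = k then snd z $ k $ i else 0)"
  by (simp add: dphi_def frechet_derivative_Fbar e_phi_def inner_vec_def mult_delta_left)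

lemma dpsi_Fbar: "dpsi (Fbar k) z j i = (if j = k then fst z $ k $ i else 0)"
  by (simp add: dpsi_def frechet_derivative_Fbar e_psi_def inner_vec_def mult_delta_right)

lemma pbracket_Fbar_Fbar: "pbracket mu (Fbar k) (Fbar l) z = 0"
  unfolding pbracket_def dphi_Fbar dpsi_Fbar by (intro sum.neutral ballI) (simp add: mult.commute)

lemma grad_Fbar:
  "grad (Fbar j) z = ((\<chi> k. if k = j then snd z $ j else 0), (\<chi> k. if k = j then fst z $ j else 0))"
  by (simp add: grad_def dphi_Fbar dpsi_Fbar vec_eq_iff)

lemma sum_scaleR_grad_Fbar:
  "(\<Sum>j\<in>UNIV. c j *\<^sub>R grad (Fbar j) z) = ((\<chi> j. c j *\<^sub>R snd z $ j), (\<chi> j. c j *\<^sub>R fst z $ j))"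
  by (simp add: grad_Fbar prod_eq_iff fst_sum snd_sum vec_eq_iff sum_component if_distrib cong: if_cong)

lemma mem_Omega_iff: "z \<in> Omega \<longleftrightarrow> (\<forall>j. fst z $ j \<noteq> 0 \<or> snd z $ j \<noteq> 0)"
  by (auto simp: Omega_def sum_nonneg_eq_0_iff add_nonneg_eq_0_iff vec_eq_iff)

lemma Fbar_grads_linear_independent:
  assumes "z \<in> Omega" and "(\<Sum>j\<in>UNIV. c j *\<^sub>R grad (Fbar j) z) = 0"
  shows "c j = 0"
proof -
  from assms(2) have "c j *\<^sub>R snd z $ j = 0" "c j *\<^sub>R fst z $ j = 0"
    by (simp_all add: sum_scaleR_grad_Fbar zero_prod_def vec_eq_iff)
  with assms(1) show ?thesis by (auto simp: mem_Omega_iff)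
qed

theorem theorem3p1:
  fixes lam mu :: "'n::finite \<Rightarrow> real"
  assumes "inj lam"
    and "\<And>j. mu j \<noteq> 0"
  shows "(\<forall>(T::real set) (\<gamma>::real \<Rightarrow> 'n state). is_interval T \<longrightarrow>
            (\<forall>t\<in>T. (\<gamma> has_derivative (\<lambda>h. h *\<^sub>R vf lam mu (\<gamma> t))) (at t within T)) \<longrightarrow>
            (\<forall>j. \<forall>s\<in>T. \<forall>t\<in>T. Fbar j (\<gamma> s) = Fbar j (\<gamma> t)))
       \<and> (\<forall>k l z. pbracket mu (Fbar k) (Fbar l) z = 0)
       \<and> (\<forall>z\<in>Omega. \<forall>c :: 'n \<Rightarrow> real.
            (\<Sum>j\<in>UNIV. c j *\<^sub>R grad (Fbar j) z) = 0 \<longrightarrow> (\<forall>j. c j = 0))"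
  using Fbar_const_on_integral_curve pbracket_Fbar_Fbar Fbar_grads_linear_independent
  by blast

end
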